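(* Let $f:\mathbb{R}^{d\times n}\to\mathbb{R}^m$ be $\mathcal{G}_{+}$-invariant and bi-Lipschitz with respect to $d_{\mathcal{G}_{+}}$. Fix an orthogonal matrix $R_0\in O(d)$ with $\det R_0=-1$ and $R_0^2=I_d$, and let $\psi:\mathbb{R}^{m\times 2}\to\mathbb{R}^k$ be invariant to swapping its two columns and bi-Lipschitz (as defined in the context). Then $\tilde f({X})=\psi(f({X}),f(R_0{X}))$ is $\mathcal{G}_{\pm}$-invariant and bi-Lipschitz with respect to $d_{\mathcal{G}_{\pm}}$.
   Context: Point sets are ${X}\in\mathbb{R}^{d\times n}$. $\mathcal{G}_{\pm}$ (resp. $\mathcal{G}_{+}$) acts by column permutations, a common matrix in $O(d)$ (resp. $SO(d)$) applied to all columns, and a common translation; a function is invariant if constant on orbits. $d_{\mathcal{G}_{\pm}}({X},{Y})=\min_{g\in\mathcal{G}_{\pm}}\|{X}-g{Y}\|_F$ and $d_{\mathcal{G}_{+}}({X},{Y})=\min_{g\in\mathcal{G}_{+}}\|{X}-g{Y}\|_F$. A function $F$ is bi-Lipschitz with respect to a metric $\rho$ if there are $0<c\le C$ with $c\,\rho({X},{Y})\le\|F({X})-F({Y})\|_2\le C\rho({X},{Y})$. For $\psi$, bi-Lipschitz means: there are $0<c_\psi\le C_\psi$ such that for all $a,b,a',b'\in\mathbb{R}^m$, with $\delta=\min\{\|a-a'\|_2+\|b-b'\|_2,\ \|a-b'\|_2+\|b-a'\|_2\}$, one has $c_\psi\delta\le\|\psi(a,b)-\psi(a',b')\|_2\le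 C_\psi\delta$. *)

theory Defs
  imports "HOL-Analysis.Analysis"
begin

text \<open>Point sets X in R^(d x n) are rendered as real^'n^'d: row index i::'d, column
index j::'n; the j-th point is the column (\<chi> i. X $ i $ j).  The norm on
real^'n^'d is exactly the Frobenius norm.\<close>

type_synonym ('d,'n) grp = "(real^'d^'d) \<times> ('n \<Rightarrow> 'n) \<times> (real^'d)"

definition gact :: "real^'d^'d \<Rightarrow> ('n \<Rightarrow> 'n) \<Rightarrow> real^'d \<Rightarrow> real^'n^'d \<Rightarrow> real^'n^'d" where
  "gact Q \<sigma> t Y = (\<chi> i j. (Q ** Y) $ i $ (\<sigma> j) + t $ i)"

definition G_pm :: "('d::finite,'n::finite) grp set" where
  "G_pm = {(Q, \<sigma>, t). orthogonal_matrix Q \<and> \<sigma> permutes UNIV}"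

definition G_plus :: "('d::finite,'n::finite) grp set" where
  "G_plus = {(Q, \<sigma>, t). orthogonal_matrix Q \<and> det Q = 1 \<and> \<sigma> permutes UNIV}"

definition G_invariant ::
  "('d::finite,'n::finite) grp set \<Rightarrow> (real^'n^'d \<Rightarrow> 'b) \<Rightarrow> bool" where
  "G_invariant G F \<longleftrightarrow> (\<forall>(Q, \<sigma>, t)\<in>G. \<forall>X. F (gact Q \<sigma> t X) = F X)"

text \<open>Quotient distance d_G(X,Y) = min over g in G of ||X - gY||_F (the minimum is attained;
we write it as an infimum).\<close>
definition d_G ::
  "('d::finite,'n::finite) grp set \<Rightarrow> real^'n^'d \<Rightarrow> real^'n^'d \<Rightarrow> real" where
  "d_G G X Y = Inf ((\<lambda>(Q, \<sigma>, t). norm (X - gact Q \<sigma> t Y)) ` G)"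

definition bi_lipschitz_wrt :: "('a \<Rightarrow> 'a \<Rightarrow> real) \<Rightarrow> ('a \<Rightarrow> 'b::real_normed_vector) \<Rightarrow> bool" where
  "bi_lipschitz_wrt \<rho> F \<longleftrightarrow> (\<exists>c C. 0 < c \<and> c \<le> C \<and>
     (\<forall>X Y. c * \<rho> X Y \<le> norm (F X - F Y) \<and> norm (F X - F Y) \<le> C * \<rho> X Y))"

text \<open>psi : R^(m x 2) -> R^k, written with its two columns as separate arguments.\<close>
definition psi_bi_lipschitz :: "(real^'m \<Rightarrow> real^'m \<Rightarrow> real^'k) \<Rightarrow> bool" where
  "psi_bi_lipschitz \<psi> \<longleftrightarrow> (\<exists>c C. 0 < c \<and> c \<le> C \<and>
     (\<forall>a b a' b'. let \<delta> = min (norm (a - a') + norm (b - b')) (norm (a - b') + norm (b - a'))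
        in c * \<delta> \<le> norm (\<psi> a b - \<psi> a' b') \<and> norm (\<psi> a b - \<psi> a' b') \<le> C * \<delta>))"

end

theory Submission
  imports Defs
begin

text \<open>A reflection \<open>R\<close> (orthogonal, \<open>det R = -1\<close>) splits \<open>O(d)\<close> into the
cosets \<open>SO(d)\<close> and \<open>SO(d) R\<close>, so \<open>d\<^sub>\<plusminus>(X,Y) = min (d\<^sub>+(X,Y)) (d\<^sub>+(X,RY))\<close>;
conjugation by \<open>R\<close> preserves \<open>SO(d)\<close>, so \<open>d\<^sub>+(RX,RY) = d\<^sub>+(X,Y)\<close>.  Hence the pairs
\<open>(f X, f (RX))\<close> and \<open>(f Y, f (RY))\<close> are at distance comparable to \<open>2 d\<^sub>+(X,Y)\<close> when
matched straight and to \<open>2 d\<^sub>+(X,RY)\<close> when matched crosswise, and the swap-invariant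
\<open>\<psi>\<close> sees exactly the better of the two matchings, i.e. \<open>d\<^sub>\<plusminus>(X,Y)\<close>.  An element of
\<open>O(d) \<setminus> SO(d)\<close> exchanges \<open>f X\<close> and \<open>f (RX)\<close> up to \<open>SO(d)\<close>, which \<open>\<psi>\<close> ignores.\<close>

lemma power2_norm_eq_sum_columns:
  "(norm (Z :: real^'n^'d))\<^sup>2 = (\<Sum>j\<in>UNIV. (norm (column j Z))\<^sup>2)"
proof -
  have "(norm Z)\<^sup>2 = (\<Sum>i\<in>UNIV. \<Sum>j\<in>UNIV. Z$i$j * Z$i$j)"
    by (simp add: power2_norm_eq_inner inner_vec_def)
  also have "\<dots> = (\<Sum>j\<in>UNIV. \<Sum>i\<in>UNIV. Z$i$j * Z$i$j)"
    by (rule sum.swap)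
  also have "\<dots> = (\<Sum>j\<in>UNIV. (norm (column j Z))\<^sup>2)"
    by (simp add: power2_norm_eq_inner inner_vec_def column_def)
  finally show ?thesis .
qed

lemma norm_orthogonal_matrix_mult:
  fixes A :: "real^'d^'d" and Z :: "real^'n^'d"
  assumes "orthogonal_matrix A"
  shows "norm (A ** Z) = norm Z"
proof -
  have column_mult: "column j (A ** Z) = A *v column j Z" for j
    by (simp add: column_def matrix_matrix_mult_def matrix_vector_mult_def vec_eq_iff)
  have norm_mult: "norm (A *v x) = norm x" for x :: "real^'d"
    using assms orthogonal_transformation_matrix[of "\<lambda>x. A *v x"]
    by (simp add: orthogonal_transformation_norm)
  have "(norm (A ** Z))\<^sup>2 = (norm Z)\<^sup>2"
    by (simp add: power2_norm_eq_sum_columns column_mult norm_mult)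
  then show ?thesis
    by (simp add: power2_eq_iff_nonneg)
qed

lemma matrix_diff_ldistrib: "(A :: real^'a^'b) ** (B - C) = A ** B - A ** C"
  by (simp add: vec_eq_iff matrix_matrix_mult_def right_diff_distrib sum_subtractf)

lemma det_orthogonal_matrix_square: "orthogonal_matrix (A :: real^'d^'d) \<Longrightarrow> det A * det A = 1"
  using det_orthogonal_matrix[of A] by auto

lemma gact_matrix_mult: "gact Q \<sigma> t (A ** Y) = gact (Q ** A) \<sigma> t Y"
  by (simp add: gact_def matrix_mul_assoc)

lemma matrix_mult_gact: "A ** gact Q \<sigma> t Y = gact (A ** Q) \<sigma> (A *v t) Y"
proof -
  have "(A ** gact Q \<sigma> t Y) $ i $ j = (A ** (Q ** Y)) $ i $ \<sigma> j + (A *v t) $ i" for i j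
    by (simp add: gact_def matrix_matrix_mult_def matrix_vector_mult_def distrib_left sum.distrib)
  then show ?thesis
    by (simp add: vec_eq_iff gact_def matrix_mul_assoc)
qed

lemma identity_in_G_plus: "(mat 1, id, 0) \<in> G_plus"
  by (simp add: G_plus_def orthogonal_matrix_id permutes_id)

lemma G_plus_subset_G_pm: "G_plus \<subseteq> G_pm"
  by (auto simp: G_plus_def G_pm_def)

lemma d_G_le: "(Q, \<sigma>, t) \<in> G \<Longrightarrow> d_G G X Y \<le> norm (X - gact Q \<sigma> t Y)"
  unfolding d_G_def by (rule cInf_lower) (force, rule bdd_belowI[of _ 0], auto)

lemma d_G_greatest:
  assumes "G \<noteq> {}" and "\<And>Q \<sigma> t. (Q, \<sigma>, t) \<in> G \<Longrightarrow> z \<le> norm (X - gact Q \<sigma> t Y)"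
  shows "z \<le> d_G G X Y"
  unfolding d_G_def using assms by (intro cInf_greatest) auto

lemma d_G_plus_orthogonal_matrix_mult:
  fixes A :: "real^'d^'d" and X Y :: "real^'n^'d"
  assumes "orthogonal_matrix A"
  shows "d_G G_plus (A ** X) (A ** Y) = d_G G_plus X Y"
proof -
  have le: "d_G G_plus (A ** X) (A ** Y) \<le> d_G G_plus X Y"
    if A: "orthogonal_matrix A" for A :: "real^'d^'d" and X Y :: "real^'n^'d"
  proof (rule d_G_greatest)
    fix Q \<sigma> t assume g: "(Q, \<sigma>, t) \<in> (G_plus :: ('d, 'n) grp set)"
    have "(A ** Q ** transpose A, \<sigma>, A *v t) \<in> (G_plus :: ('d, 'n) grp set)"
      using g A det_orthogonal_matrix_square[OF A]
      by (simp add: G_plus_def orthogonal_matrix_mul det_mul det_transpose)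
    moreover have "A ** X - gact (A ** Q ** transpose A) \<sigma> (A *v t) (A ** Y)
        = A ** (X - gact Q \<sigma> t Y)"
      using A by (simp add: gact_matrix_mult matrix_mult_gact matrix_diff_ldistrib orthogonal_matrix
          flip: matrix_mul_assoc)
    ultimately show "d_G G_plus (A ** X) (A ** Y) \<le> norm (X - gact Q \<sigma> t Y)"
      by (metis d_G_le norm_orthogonal_matrix_mult A)
  qed (use identity_in_G_plus in blast)
  show ?thesis
    using le[OF assms, of X Y] le[of "transpose A" "A ** X" "A ** Y"] assms
    by (simp add: matrix_mul_assoc orthogonal_matrix_def)
qed

lemma d_G_pm_eq_min:
  fixes R :: "real^'d^'d" and X Y :: "real^'n^'d"
  assumes R: "orthogonal_matrix R" "det R = -1"
  shows "d_G G_pm X Y = min (d_G G_plus X Y) (d_G G_plus X (R ** Y))"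
proof (rule antisym)
  have G_plus_ne: "(G_plus :: ('d, 'n) grp set) \<noteq> {}"
    using identity_in_G_plus by blast
  show "d_G G_pm X Y \<le> min (d_G G_plus X Y) (d_G G_plus X (R ** Y))"
  proof (rule min.boundedI)
    show "d_G G_pm X Y \<le> d_G G_plus X Y"
      using G_plus_ne by (rule d_G_greatest) (meson G_plus_subset_G_pm d_G_le subsetD)
    show "d_G G_pm X Y \<le> d_G G_plus X (R ** Y)"
    proof (rule d_G_greatest[OF G_plus_ne])
      fix Q \<sigma> t assume "(Q, \<sigma>, t) \<in> (G_plus :: ('d, 'n) grp set)"
      then have "(Q ** R, \<sigma>, t) \<in> (G_pm :: ('d, 'n) grp set)"
        using R by (simp add: G_plus_def G_pm_def orthogonal_matrix_mul)
      then show "d_G G_pm X Y \<le> norm (X - gact Q \<sigma> t (R ** Y))"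
        by (metis d_G_le gact_matrix_mult)
    qed
  qed
  show "min (d_G G_plus X Y) (d_G G_plus X (R ** Y)) \<le> d_G G_pm X Y"
  proof (rule d_G_greatest)
    show "(G_pm :: ('d, 'n) grp set) \<noteq> {}"
      using G_plus_ne G_plus_subset_G_pm by blast
    fix Q \<sigma> t assume g: "(Q, \<sigma>, t) \<in> (G_pm :: ('d, 'n) grp set)"
    then consider "(Q, \<sigma>, t) \<in> (G_plus :: ('d, 'n) grp set)"
      | "(Q ** transpose R, \<sigma>, t) \<in> (G_plus :: ('d, 'n) grp set)"
      using det_orthogonal_matrix R
      by (fastforce simp: G_pm_def G_plus_def orthogonal_matrix_mul det_mul det_transpose)
    then show "min (d_G G_plus X Y) (d_G G_plus X (R ** Y)) \<le> norm (X - gact Q \<sigma> t Y)"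
    proof cases
      case 1
      then show ?thesis
        by (meson d_G_le min.coboundedI1)
    next
      case 2
      moreover have "gact (Q ** transpose R) \<sigma> t (R ** Y) = gact Q \<sigma> t Y"
        using R by (simp add: gact_matrix_mult orthogonal_matrix flip: matrix_mul_assoc)
      ultimately show ?thesis
        by (metis d_G_le min.coboundedI2)
    qed
  qed
qed

lemma G_plus_invariant_gact:
  fixes f :: "real^'n^'d \<Rightarrow> 'b" and Q B :: "real^'d^'d"
  assumes "G_invariant G_plus f" and "\<sigma> permutes UNIV"
    and "orthogonal_matrix Q" "orthogonal_matrix B" "det Q = det B"
  shows "f (gact Q \<sigma> t X) = f (B ** X)"
proof -
  have "(Q ** transpose B, \<sigma>, t) \<in> (G_plus :: ('d, 'n) grp set)"
    using assms(2-5) det_orthogonal_matrix_square[of B]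
    by (simp add: G_plus_def orthogonal_matrix_mul det_mul det_transpose)
  then have "f (gact (Q ** transpose B) \<sigma> t (B ** X)) = f (B ** X)"
    using assms(1) unfolding G_invariant_def by blast
  moreover have "gact (Q ** transpose B) \<sigma> t (B ** X) = gact Q \<sigma> t X"
    using assms(4) by (simp add: gact_matrix_mult orthogonal_matrix flip: matrix_mul_assoc)
  ultimately show ?thesis
    by simp
qed

lemma G_pm_invariant_symmetrization:
  fixes f :: "real^'n^'d \<Rightarrow> 'b" and \<psi> :: "'b \<Rightarrow> 'b \<Rightarrow> 'c" and R :: "real^'d^'d"
  assumes f: "G_invariant G_plus f" and R: "orthogonal_matrix R" "det R = -1"
    and \<psi>_swap: "\<And>a b. \<psi> a b = \<psi> b a"
  shows "G_invariant G_pm (\<lambda>X. \<psi> (f X) (f (R ** X)))"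
  unfolding G_invariant_def
proof clarify
  fix Q \<sigma> t X assume "(Q, \<sigma>, t) \<in> (G_pm :: ('d, 'n) grp set)"
  then have Q: "orthogonal_matrix Q" and \<sigma>: "\<sigma> permutes UNIV"
    by (auto simp: G_pm_def)
  have f_gact: "f (gact Q \<sigma> t X) = f (B ** X)"
    if "orthogonal_matrix B" "det B = det Q" for B
    using G_plus_invariant_gact[OF f \<sigma> Q that(1)] that(2) by simp
  have f_R_gact: "f (R ** gact Q \<sigma> t X) = f (B ** X)"
    if "orthogonal_matrix B" "det B = - det Q" for B
    using G_plus_invariant_gact[OF f \<sigma> orthogonal_matrix_mul[OF R(1) Q] that(1)] that(2) R(2)
    by (simp add: matrix_mult_gact det_mul)
  consider "det Q = 1" | "det Q = -1"
    using det_orthogonal_matrix[OF Q] by blast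
  then show "\<psi> (f (gact Q \<sigma> t X)) (f (R ** gact Q \<sigma> t X)) = \<psi> (f X) (f (R ** X))"
  proof cases
    case 1
    then show ?thesis
      using f_gact[of "mat 1"] f_R_gact[of R] R by (simp add: orthogonal_matrix_id)
  next
    case 2
    then show ?thesis
      using f_gact[of R] f_R_gact[of "mat 1"] R \<psi>_swap by (simp add: orthogonal_matrix_id)
  qed
qed

lemma min_sum_pairs_bounds:
  fixes c C A B a a' b b' :: real
  assumes "0 \<le> c"
    and "a \<in> {c * A..C * A}" "a' \<in> {c * A..C * A}" "b \<in> {c * B..C * B}" "b' \<in> {c * B..C * B}"
  shows "2 * c * min A B \<le> min (a + a') (b + b')"
    and "min (a + a') (b + b') \<le> 2 * C * min A B"
proof -
  have "c * min A B \<le> c * A" "c * min A B \<le> c * B"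
    using assms(1) by (simp_all add: mult_left_mono)
  then show "2 * c * min A B \<le> min (a + a') (b + b')"
    using assms(2-5) by auto
  show "min (a + a') (b + b') \<le> 2 * C * min A B"
    using assms(2-5) by (cases "A \<le> B") (auto simp: min_def)
qed

lemma G_pm_bi_lipschitz_symmetrization:
  fixes f :: "real^'n^'d \<Rightarrow> real^'m" and \<psi> :: "real^'m \<Rightarrow> real^'m \<Rightarrow> real^'k"
    and R :: "real^'d^'d"
  assumes f: "bi_lipschitz_wrt (d_G G_plus) f"
    and R: "orthogonal_matrix R" "det R = -1" "R ** R = mat 1"
    and \<psi>: "psi_bi_lipschitz \<psi>"
  shows "bi_lipschitz_wrt (d_G G_pm) (\<lambda>X. \<psi> (f X) (f (R ** X)))"
proof -
  obtain cf Cf where cf: "0 < cf" "cf \<le> Cf"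
    and f_bounds: "\<And>X Y. norm (f X - f Y) \<in> {cf * d_G G_plus X Y..Cf * d_G G_plus X Y}"
    using f unfolding bi_lipschitz_wrt_def atLeastAtMost_iff by blast
  obtain cp Cp where cp: "0 < cp" "cp \<le> Cp"
    and \<psi>_bounds: "\<And>a b a' b'. norm (\<psi> a b - \<psi> a' b') \<in>
      {cp * min (norm (a - a') + norm (b - b')) (norm (a - b') + norm (b - a'))..
       Cp * min (norm (a - a') + norm (b - b')) (norm (a - b') + norm (b - a'))}"
    using \<psi> unfolding psi_bi_lipschitz_def Let_def atLeastAtMost_iff by blast
  have bounds: "2 * cp * cf * d_G G_pm X Y \<le> norm (\<psi> (f X) (f (R ** X)) - \<psi> (f Y) (f (R ** Y)))
      \<and> norm (\<psi> (f X) (f (R ** X)) - \<psi> (f Y) (f (R ** Y))) \<le> 2 * Cp * Cf * d_G G_pm X Y"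
    for X Y :: "real^'n^'d"
  proof -
    define \<delta> where "\<delta> = min (norm (f X - f Y) + norm (f (R ** X) - f (R ** Y)))
      (norm (f X - f (R ** Y)) + norm (f (R ** X) - f Y))"
    have straight: "norm (f (R ** X) - f (R ** Y)) \<in> {cf * d_G G_plus X Y..Cf * d_G G_plus X Y}"
      using f_bounds[of "R ** X" "R ** Y"] d_G_plus_orthogonal_matrix_mult[OF R(1), of X Y] by simp
    have crossed: "norm (f (R ** X) - f Y) \<in>
        {cf * d_G G_plus X (R ** Y)..Cf * d_G G_plus X (R ** Y)}"
      using f_bounds[of "R ** X" Y] d_G_plus_orthogonal_matrix_mult[OF R(1), of X "R ** Y"] R(3)
      by (simp add: matrix_mul_assoc)
    have "2 * cf * d_G G_pm X Y \<le> \<delta>" "\<delta> \<le> 2 * Cf * d_G G_pm X Y"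
      using min_sum_pairs_bounds[OF _ f_bounds straight f_bounds crossed] cf
      unfolding \<delta>_def d_G_pm_eq_min[OF R(1,2)] by simp_all
    then have "cp * (2 * cf * d_G G_pm X Y) \<le> cp * \<delta>" "Cp * \<delta> \<le> Cp * (2 * Cf * d_G G_pm X Y)"
      using cp by (simp_all add: mult_left_mono)
    then show ?thesis
      using \<psi>_bounds[of "f X" "f (R ** X)" "f Y" "f (R ** Y)"] unfolding \<delta>_def
      by (auto simp: ac_simps)
  qed
  have "cp * cf \<le> Cp * Cf"
    using cp cf by (intro mult_mono) auto
  then show ?thesis
    unfolding bi_lipschitz_wrt_def using cp cf bounds
    by (intro exI[of _ "2 * cp * cf"] exI[of _ "2 * Cp * Cf"]) auto
qed

theorem proposition1:
  fixes f :: "real^'n^'d \<Rightarrow> real^'m"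
    and \<psi> :: "real^'m \<Rightarrow> real^'m \<Rightarrow> real^'k"
    and R0 :: "real^'d^'d"
  assumes f_inv: "G_invariant G_plus f"
    and f_bilip: "bi_lipschitz_wrt (d_G G_plus) f"
    and R0_orth: "orthogonal_matrix R0"
    and R0_det: "det R0 = -1"
    and R0_sq: "R0 ** R0 = mat 1"
    and \<psi>_swap: "\<And>a b. \<psi> a b = \<psi> b a"
    and \<psi>_bilip: "psi_bi_lipschitz \<psi>"
  shows "G_invariant G_pm (\<lambda>X. \<psi> (f X) (f (R0 ** X)))
       \<and> bi_lipschitz_wrt (d_G G_pm) (\<lambda>X. \<psi> (f X) (f (R0 ** X)))"
  using G_pm_invariant_symmetrization[where \<psi> = \<psi>, OF f_inv R0_orth R0_det \<psi>_swap]
    G_pm_bi_lipschitz_symmetrization[OF f_bilip R0_orth R0_det R0_sq \<psi>_bilip]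
  by blast

end
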